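(* Assume that $d_k^2 < 2p_{k+1}$ for every $k\geq1$. Then for every $n\geq 1$, $d_n \leq 2\lfloor\sqrt{p_n}\rfloor$; moreover, if $d_n = 2\lfloor \sqrt{p_n}\rfloor$ then $\lfloor\sqrt{p_{n+1}}\rfloor = \lfloor\sqrt{p_n}\rfloor + 1$.
   Context: $p_k$ denotes the $k$th prime ($p_1=2$) and $d_k := p_{k+1}-p_k$. *)

theory Defs
  imports Complex_Main "HOL-Computational_Algebra.Primes" "HOL-Library.Infinite_Set"
begin

text \<open>The k-th prime, 1-indexed: pr 1 = 2, pr 2 = 3, ...
  (enumerate is 0-indexed, hence the shift; pr 0 is a junk value and never used.)\<close>
definition pr :: "nat \<Rightarrow> nat" where
  "pr k = enumerate {p::nat. prime p} (k - 1)"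

definition gap :: "nat \<Rightarrow> nat" where
  "gap k = pr (Suc k) - pr k"

end

theory Submission
  imports Defs "HOL-Library.Discrete_Functions"
begin

text \<open>Let \<open>p < q\<close> be consecutive primes, \<open>d = q - p\<close> and \<open>k = \<lfloor>\<surd>p\<rfloor>\<close>, so
  \<open>p \<le> k\<^sup>2 + 2k\<close>. The hypothesis \<open>d\<^sup>2 < 2q = 2p + 2d\<close> says \<open>d(d - 2) < 2p\<close>; for odd \<open>p\<close> the gap
  \<open>d\<close> is even, and \<open>d \<ge> 2k + 2\<close> would give \<open>d(d - 2) \<ge> 4k\<^sup>2 + 4k \<ge> 2p\<close>. If \<open>d = 2k\<close>, then
  \<open>q = p + 2k\<close> lies in \<open>[(k+1)\<^sup>2, (k+2)\<^sup>2)\<close> because the prime \<open>p\<close> is not the square \<open>k\<^sup>2\<close>.\<close>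

lemma floor_sqrt_of_nat: "\<lfloor>sqrt (real n)\<rfloor> = int (floor_sqrt n)"
proof -
  have "real (floor_sqrt n) \<le> sqrt (real n)"
    by (rule real_le_rsqrt) (metis floor_sqrt_power2_le of_nat_le_iff of_nat_power)
  moreover have "sqrt (real n) < real (floor_sqrt n) + 1"
  proof (rule real_less_lsqrt)
    have "real n < real ((floor_sqrt n + 1)\<^sup>2)"
      using Suc_floor_sqrt_power2_gt[of n] by (simp only: of_nat_less_iff Suc_eq_plus1)
    then show "real n < (real (floor_sqrt n) + 1)\<^sup>2"
      by (simp add: add.commute)
  qed simp
  ultimately show ?thesis
    by (simp add: floor_eq_iff)
qed

lemma floor_sqrt_add_twice_floor_sqrt:
  assumes "(floor_sqrt n)\<^sup>2 \<noteq> n"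
  shows "floor_sqrt (n + 2 * floor_sqrt n) = floor_sqrt n + 1"
proof (rule floor_sqrt_unique)
  let ?k = "floor_sqrt n"
  have "?k\<^sup>2 < n"
    using assms floor_sqrt_power2_le[of n] by linarith
  moreover have "n < (Suc ?k)\<^sup>2"
    by (rule Suc_floor_sqrt_power2_gt)
  ultimately show "(?k + 1)\<^sup>2 \<le> n + 2 * ?k" and "n + 2 * ?k < (Suc (?k + 1))\<^sup>2"
    by (simp_all add: power2_eq_square)
qed

lemma even_le_twice_floor_sqrt:
  fixes d n :: nat
  assumes "even d" and "d\<^sup>2 < 2 * (n + d)"
  shows "d \<le> 2 * floor_sqrt n"
proof (rule ccontr)
  let ?k = "floor_sqrt n"
  assume "\<not> d \<le> 2 * ?k"
  with \<open>even d\<close> have "d \<ge> 2 * ?k + 2"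
    by presburger
  then obtain e where e: "d = 2 * ?k + 2 + e"
    using le_Suc_ex by blast
  have "n < (?k + 1)\<^sup>2"
    using Suc_floor_sqrt_power2_gt[of n] by simp
  moreover have "d\<^sup>2 \<ge> 4 * ?k\<^sup>2 + 8 * ?k + 4 + 2 * e"
    unfolding e by (simp add: power2_eq_square algebra_simps)
  ultimately show False
    using assms(2) e by (simp add: power2_eq_square)
qed

lemma consecutive_primes_gap_le_twice_floor_sqrt:
  fixes p q :: nat
  assumes "prime p" "prime q" "p < q"
    and no_prime_between: "\<And>r. p < r \<Longrightarrow> r < q \<Longrightarrow> \<not> prime r"
    and gap_bound: "(q - p)\<^sup>2 < 2 * q"
  shows "q - p \<le> 2 * floor_sqrt p"
proof (cases "p = 2")
  case True
  have "q \<le> 3"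
    using no_prime_between[of 3] True by (cases "q \<le> 3") auto
  moreover have "floor_sqrt p \<ge> 1"
    using True by (simp add: Suc_le_eq)
  ultimately show ?thesis
    using True by linarith
next
  case False
  then have "odd p" "odd q"
    using assms(1-3) prime_ge_2_nat[of p] prime_odd_nat by auto
  with \<open>p < q\<close> have "even (q - p)"
    by simp
  moreover have "(q - p)\<^sup>2 < 2 * (p + (q - p))"
    using gap_bound \<open>p < q\<close> by simp
  ultimately show ?thesis
    by (rule even_le_twice_floor_sqrt)
qed

lemma prime_pr: "prime (pr n)"
  unfolding pr_def using enumerate_in_set[OF primes_infinite] by blast

lemma pr_less_pr_Suc: "n \<ge> 1 \<Longrightarrow> pr n < pr (Suc n)"
  unfolding pr_def using primes_infinite by simp

lemma not_prime_between_pr: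
  assumes "n \<ge> 1" "pr n < r" "r < pr (Suc n)"
  shows "\<not> prime r"
proof
  assume "prime r"
  then obtain j where j: "enumerate {p::nat. prime p} j = r"
    using enumerate_Ex[OF primes_infinite] by blast
  have "n - 1 < j" "j < n"
    using assms primes_infinite unfolding pr_def j[symmetric] by auto
  then show False
    by simp
qed

theorem theorem6p1:
  assumes "\<forall>k\<ge>1. real (gap k) ^ 2 < 2 * real (pr (Suc k))"
  shows "\<forall>n\<ge>1. real (gap n) \<le> 2 * of_int \<lfloor>sqrt (real (pr n))\<rfloor> \<and>
           (real (gap n) = 2 * of_int \<lfloor>sqrt (real (pr n))\<rfloor> \<longrightarrow>
              \<lfloor>sqrt (real (pr (Suc n)))\<rfloor> = \<lfloor>sqrt (real (pr n))\<rfloor> + 1)"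
proof (intro allI impI conjI)
  fix n :: nat
  assume "n \<ge> 1"
  let ?p = "pr n" and ?q = "pr (Suc n)"
  have "real (gap n ^ 2) < real (2 * ?q)"
    using assms \<open>n \<ge> 1\<close> by simp
  then have gap_bound: "(?q - ?p)\<^sup>2 < 2 * ?q"
    unfolding of_nat_less_iff gap_def .
  have between: "\<And>r. ?p < r \<Longrightarrow> r < ?q \<Longrightarrow> \<not> prime r"
    using not_prime_between_pr[OF \<open>n \<ge> 1\<close>] .
  have "gap n \<le> 2 * floor_sqrt ?p"
    unfolding gap_def
    using prime_pr prime_pr pr_less_pr_Suc[OF \<open>n \<ge> 1\<close>] between gap_bound
    by (rule consecutive_primes_gap_le_twice_floor_sqrt)
  then show "real (gap n) \<le> 2 * of_int \<lfloor>sqrt (real ?p)\<rfloor>"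
    by (simp add: floor_sqrt_of_nat)
  assume "real (gap n) = 2 * of_int \<lfloor>sqrt (real ?p)\<rfloor>"
  then have "gap n = 2 * floor_sqrt ?p"
    by (simp add: floor_sqrt_of_nat)
  then have "?q = ?p + 2 * floor_sqrt ?p"
    using pr_less_pr_Suc[OF \<open>n \<ge> 1\<close>] unfolding gap_def by linarith
  moreover have "(floor_sqrt ?p)\<^sup>2 \<noteq> ?p"
    using prime_pr[of n] prime_power_iff[of "floor_sqrt ?p" 2] by auto
  ultimately have "floor_sqrt ?q = floor_sqrt ?p + 1"
    by (simp add: floor_sqrt_add_twice_floor_sqrt)
  then show "\<lfloor>sqrt (real ?q)\<rfloor> = \<lfloor>sqrt (real ?p)\<rfloor> + 1"
    unfolding floor_sqrt_of_nat by simp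
qed

end
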